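(* For every graph $G$, the graph $KB_m(G)$ contains no induced subgraph isomorphic to a $\mathrm{net}^*$ graph.
   Context: All graphs are finite and simple. A biclique of a graph $G$ is a set $P\subseteq V(G)$ such that the induced subgraph $G[P]$ is a complete bipartite graph with both parts nonempty, and $P$ is inclusion-maximal with this property. Since $G[P]$ is connected, its bipartition into two nonempty independent sets $X,Y$ (every vertex of $X$ adjacent to every vertex of $Y$) is unique; we write $P=XY$ to mean $P=X\cup Y$ with $X,Y$ these two parts, called the sides of $P$. Two bicliques $P,Q$ of $G$ are mutually included if their sides can be named $P=X_PY_P$, $Q=X_QY_Q$ so that $X_Q\subsetneq X_P$ and $Y_P\subsetneq Y_Q$. The mutually included biclique graph $KB_m(G)$ has the set of bicliques of $G$ as vertex set, two distinct bicliques being adjacent iff they are mutually included. The net is the graph on six vertices $x_1,x_2,x_3,s_1,s_2,s_3$ whose edges are $x_1x_2,x_2x_3,x_1x_3,x_1s_1,x_2s_2,x_3s_3$. A $\mathrm{net}^*$ graph is any graph obtained from the net by adding zero or more edges, each joining two vertices of $\{s_1,s_2,s_3\}$. *)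

theory Defs
  imports Main
begin

text \<open>A (finite simple) graph is given by a vertex set V and an adjacency relation E;
  all notions below only look at E restricted to V.\<close>

definition simple_graph :: "'a set \<Rightarrow> ('a \<Rightarrow> 'a \<Rightarrow> bool) \<Rightarrow> bool" where
  "simple_graph V E \<longleftrightarrow> finite V \<and> (\<forall>x y. E x y \<longrightarrow> E y x) \<and> (\<forall>x. \<not> E x x)"

definition sides :: "('a \<Rightarrow> 'a \<Rightarrow> bool) \<Rightarrow> 'a set \<Rightarrow> 'a set \<Rightarrow> 'a set \<Rightarrow> bool" where
  "sides E P X Y \<longleftrightarrow> X \<noteq> {} \<and> Y \<noteq> {} \<and> X \<inter> Y = {} \<and> P = X \<union> Y
     \<and> (\<forall>x\<in>X. \<forall>x'\<in>X. \<not> E x x') \<and> (\<forall>y\<in>Y. \<forall>y'\<in>Y. \<not> E y y')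
     \<and> (\<forall>x\<in>X. \<forall>y\<in>Y. E x y)"

definition complete_bipartite_set :: "('a \<Rightarrow> 'a \<Rightarrow> bool) \<Rightarrow> 'a set \<Rightarrow> bool" where
  "complete_bipartite_set E P \<longleftrightarrow> (\<exists>X Y. sides E P X Y)"

definition biclique :: "'a set \<Rightarrow> ('a \<Rightarrow> 'a \<Rightarrow> bool) \<Rightarrow> 'a set \<Rightarrow> bool" where
  "biclique V E P \<longleftrightarrow> P \<subseteq> V \<and> complete_bipartite_set E P
     \<and> (\<forall>Q. P \<subset> Q \<and> Q \<subseteq> V \<longrightarrow> \<not> complete_bipartite_set E Q)"

definition mutually_included :: "('a \<Rightarrow> 'a \<Rightarrow> bool) \<Rightarrow> 'a set \<Rightarrow> 'a set \<Rightarrow> bool" where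
  "mutually_included E P Q \<longleftrightarrow> (\<exists>XP YP XQ YQ. sides E P XP YP \<and> sides E Q XQ YQ
     \<and> XQ \<subset> XP \<and> YP \<subset> YQ)"

definition KBm_V :: "'a set \<Rightarrow> ('a \<Rightarrow> 'a \<Rightarrow> bool) \<Rightarrow> 'a set set" where
  "KBm_V V E = {P. biclique V E P}"

definition KBm_E :: "'a set \<Rightarrow> ('a \<Rightarrow> 'a \<Rightarrow> bool) \<Rightarrow> 'a set \<Rightarrow> 'a set \<Rightarrow> bool" where
  "KBm_E V E P Q \<longleftrightarrow> biclique V E P \<and> biclique V E Q \<and> P \<noteq> Q
     \<and> (mutually_included E P Q \<or> mutually_included E Q P)"

text \<open>The net on vertices 0..5 with x1=0, x2=1, x3=2, s1=3, s2=4, s3=5.\<close>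
definition net_V :: "nat set" where
  "net_V = {0..<6}"

definition net_E :: "nat \<Rightarrow> nat \<Rightarrow> bool" where
  "net_E a b \<longleftrightarrow> {a, b} \<in> {{0,1}, {1,2}, {0,2}, {0,3}, {1,4}, {2,5}}"

definition net_star_E :: "nat set set \<Rightarrow> nat \<Rightarrow> nat \<Rightarrow> bool" where
  "net_star_E S a b \<longleftrightarrow> net_E a b \<or> {a, b} \<in> S"

definition net_star_extra :: "nat set set \<Rightarrow> bool" where
  "net_star_extra S \<longleftrightarrow> S \<subseteq> {{3,4}, {3,5}, {4,5}}"

definition has_induced_copy ::
  "'a set \<Rightarrow> ('a \<Rightarrow> 'a \<Rightarrow> bool) \<Rightarrow> 'b set \<Rightarrow> ('b \<Rightarrow> 'b \<Rightarrow> bool) \<Rightarrow> bool" where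
  "has_induced_copy V E W F \<longleftrightarrow> (\<exists>f. inj_on f W \<and> f ` W \<subseteq> V
     \<and> (\<forall>a\<in>W. \<forall>b\<in>W. E (f a) (f b) \<longleftrightarrow> F a b))"

end

theory Submission
  imports Defs
begin

text \<open>Orient each biclique as a pair (X, Y) of its sides and write (X, Y) < (X', Y') when
  X' \<subset> X and Y \<subset> Y'. Two bicliques are adjacent in KB_m(G) iff some orientations are
  comparable, i.e. iff they are comparable after possibly swapping the sides of one of them.
  Two bicliques above (or below) a common one can only be comparable without swapping, so
  every triangle of KB_m(G) can be oriented into a chain a < b < c. By transitivity, every
  neighbour of the middle vertex b is a neighbour of a or of c, so b has no private neighbour
  outside the triangle. In a net* graph, however, each x_i has the private neighbour s_i.\<close>

lemma sides_opposite_eq_neighbours: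
  assumes "sides E P X Y" "x \<in> X"
  shows "Y = {y \<in> P. E x y}"
  using assms unfolding sides_def by blast

lemma sides_unique_oriented:
  assumes "sides E P A B" "sides E P C D" "a \<in> A" "a \<in> C"
  shows "A = C \<and> B = D"
proof -
  have "B = D"
    using sides_opposite_eq_neighbours[OF assms(1,3)] sides_opposite_eq_neighbours[OF assms(2,4)]
    by simp
  moreover have "A = P - B" "C = P - D" using assms(1,2) unfolding sides_def by auto
  ultimately show ?thesis by simp
qed

definition side_pair :: "('a \<Rightarrow> 'a \<Rightarrow> bool) \<Rightarrow> 'a set \<Rightarrow> 'a set \<times> 'a set \<Rightarrow> bool" where
  "side_pair E P p \<longleftrightarrow> sides E P (fst p) (snd p)"

definition mi_less :: "'a set \<times> 'a set \<Rightarrow> 'a set \<times> 'a set \<Rightarrow> bool" where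
  "mi_less p q \<longleftrightarrow> fst q \<subset> fst p \<and> snd p \<subset> snd q"

definition mi_adj :: "'a set \<times> 'a set \<Rightarrow> 'a set \<times> 'a set \<Rightarrow> bool" where
  "mi_adj p q \<longleftrightarrow> mi_less p q \<or> mi_less q p \<or> mi_less p (prod.swap q) \<or> mi_less (prod.swap q) p"

lemma mi_less_trans: "mi_less p q \<Longrightarrow> mi_less q r \<Longrightarrow> mi_less p r"
  unfolding mi_less_def by blast

lemma mi_less_swap_swap [simp]: "mi_less (prod.swap p) (prod.swap q) \<longleftrightarrow> mi_less q p"
  unfolding mi_less_def by auto

lemma mi_less_swap_left: "mi_less (prod.swap p) q \<longleftrightarrow> mi_less (prod.swap q) p"
  unfolding mi_less_def by auto

lemma mi_less_swap_right: "mi_less p (prod.swap q) \<longleftrightarrow> mi_less q (prod.swap p)"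
  unfolding mi_less_def by auto

lemma mi_adj_commute: "mi_adj q p \<longleftrightarrow> mi_adj p q"
  unfolding mi_adj_def by (metis mi_less_swap_swap mi_less_swap_left swap_swap)

lemma mi_adj_swap_right [simp]: "mi_adj p (prod.swap q) \<longleftrightarrow> mi_adj p q"
  unfolding mi_adj_def by (metis mi_less_swap_swap mi_less_swap_left swap_swap)

lemma mi_adj_swap_left [simp]: "mi_adj (prod.swap p) q \<longleftrightarrow> mi_adj p q"
  by (metis mi_adj_commute mi_adj_swap_right)

lemma mi_adj_middle:
  "mi_less p q \<Longrightarrow> mi_less q r \<Longrightarrow> \<forall>d. mi_adj q d \<longrightarrow> mi_adj p d \<or> mi_adj r d"
  unfolding mi_adj_def using mi_less_trans by blast

lemma side_pair_swap:
  "\<forall>x y. E x y \<longrightarrow> E y x \<Longrightarrow> side_pair E P p \<Longrightarrow> side_pair E P (prod.swap p)"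
  unfolding side_pair_def sides_def by auto

lemma side_pair_unique:
  assumes sym: "\<forall>x y. E x y \<longrightarrow> E y x" and "side_pair E P p" "side_pair E P q"
  shows "q = p \<or> q = prod.swap p"
proof -
  obtain A B C D where pq: "p = (A, B)" "q = (C, D)" by (metis prod.collapse)
  then have AB: "sides E P A B" and CD: "sides E P C D" "sides E P D C"
    using assms side_pair_swap[OF sym assms(3)] by (simp_all add: side_pair_def)
  have "A \<noteq> {}" "A \<subseteq> C \<union> D" using AB CD(1) unfolding sides_def by auto
  then obtain a where "a \<in> A" "a \<in> C \<or> a \<in> D" by blast
  then show ?thesis
    using sides_unique_oriented[OF AB CD(1)] sides_unique_oriented[OF AB CD(2)] pq by auto
qed

lemma biclique_side_pair: "biclique V E P \<Longrightarrow> \<exists>p. side_pair E P p"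
  unfolding biclique_def complete_bipartite_set_def side_pair_def by auto

lemma mutually_included_iff_side_pairs:
  "mutually_included E P Q \<longleftrightarrow> (\<exists>p q. side_pair E P p \<and> side_pair E Q q \<and> mi_less p q)"
  unfolding mutually_included_def side_pair_def mi_less_def by (simp add: split_paired_Ex)

lemma mutually_included_either_iff_mi_adj:
  assumes sym: "\<forall>x y. E x y \<longrightarrow> E y x" and p: "side_pair E P p" and q: "side_pair E Q q"
  shows "mutually_included E P Q \<or> mutually_included E Q P \<longleftrightarrow> mi_adj p q"
proof
  assume "mutually_included E P Q \<or> mutually_included E Q P"
  then obtain p' q' where "side_pair E P p'" "side_pair E Q q'" "mi_adj p' q'"
    unfolding mutually_included_iff_side_pairs mi_adj_def by blast
  moreover from this have "p' = p \<or> p' = prod.swap p" "q' = q \<or> q' = prod.swap q"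
    using side_pair_unique[OF sym p] side_pair_unique[OF sym q] by blast+
  ultimately show "mi_adj p q" by auto
next
  assume "mi_adj p q"
  then show "mutually_included E P Q \<or> mutually_included E Q P"
    unfolding mutually_included_iff_side_pairs mi_adj_def
    using p q side_pair_swap[OF sym q] by blast
qed

lemma KBm_E_iff_mi_adj:
  assumes "\<forall>x y. E x y \<longrightarrow> E y x" "side_pair E P p" "side_pair E Q q"
  shows "KBm_E V E P Q \<longleftrightarrow> biclique V E P \<and> biclique V E Q \<and> P \<noteq> Q \<and> mi_adj p q"
  unfolding KBm_E_def using mutually_included_either_iff_mi_adj[OF assms] by blast

lemma mi_less_upper_bounds_uncrossed:
  assumes "side_pair E P a" "side_pair E Q b" "side_pair E R c" "mi_less a b" "mi_less a c"
  shows "\<not> mi_less c (prod.swap b) \<and> \<not> mi_less (prod.swap b) c"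
proof -
  obtain A B C D F G where abc: "a = (A, B)" "b = (C, D)" "c = (F, G)"
    by (metis prod.collapse)
  have a_sides: "A \<inter> B = {}" "B \<noteq> {}" "\<forall>x\<in>A. \<forall>y\<in>B. E x y"
    and "C \<noteq> {}" and indep_G: "\<forall>x\<in>G. \<forall>x'\<in>G. \<not> E x x'"
    using assms(1-3) unfolding abc side_pair_def sides_def by auto
  have "C \<subset> A" "B \<subset> D" "F \<subset> A" "B \<subset> G"
    using assms(4,5) unfolding abc mi_less_def by auto
  txt \<open>D \<subset> F would put B inside A; C \<subset> G would put the edges between C \<subseteq> A and B
    inside the independent side G.\<close>
  have "\<not> D \<subset> F" using \<open>B \<subset> D\<close> \<open>F \<subset> A\<close> a_sides(1,2) by blast
  moreover have "\<not> C \<subset> G"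
  proof
    assume "C \<subset> G"
    obtain x y where "x \<in> C" "y \<in> B" using \<open>C \<noteq> {}\<close> a_sides(2) by blast
    then show False using \<open>C \<subset> G\<close> \<open>C \<subset> A\<close> \<open>B \<subset> G\<close> a_sides(3) indep_G by blast
  qed
  ultimately show ?thesis unfolding abc mi_less_def by simp
qed

lemma mi_less_lower_bounds_uncrossed:
  assumes sym: "\<forall>x y. E x y \<longrightarrow> E y x"
    and "side_pair E P a" "side_pair E Q b" "side_pair E R c" "mi_less b a" "mi_less c a"
  shows "\<not> mi_less c (prod.swap b) \<and> \<not> mi_less (prod.swap b) c"
proof -
  have "mi_less (prod.swap a) (prod.swap b)" "mi_less (prod.swap a) (prod.swap c)"
    using assms(5,6) by simp_all
  then have "\<not> mi_less (prod.swap c) b \<and> \<not> mi_less b (prod.swap c)"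
    using mi_less_upper_bounds_uncrossed[OF side_pair_swap[OF sym assms(2)]
        side_pair_swap[OF sym assms(3)] side_pair_swap[OF sym assms(4)]] by simp
  then show ?thesis by (metis mi_less_swap_left mi_less_swap_right)
qed

lemma mi_adj_orient:
  assumes sym: "\<forall>x y. E x y \<longrightarrow> E y x" and b: "side_pair E Q b" and "mi_adj a b"
  obtains b' where "side_pair E Q b'" "mi_less a b' \<or> mi_less b' a" "mi_adj b' = mi_adj b"
proof (cases "mi_less a b \<or> mi_less b a")
  case True
  then show ?thesis using that b by blast
next
  case False
  then have "mi_less a (prod.swap b) \<or> mi_less (prod.swap b) a"
    using assms(3) unfolding mi_adj_def by blast
  then show ?thesis using that[of "prod.swap b"] side_pair_swap[OF sym b] by (simp add: fun_eq_iff)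
qed

lemma mi_adj_oriented_triangle_has_middle:
  assumes sym: "\<forall>x y. E x y \<longrightarrow> E y x"
    and a: "side_pair E P a" and b: "side_pair E Q b" and c: "side_pair E R c"
    and "mi_less a b \<or> mi_less b a" "mi_less a c \<or> mi_less c a" and bc: "mi_adj b c"
  shows "(\<forall>d. mi_adj a d \<longrightarrow> mi_adj b d \<or> mi_adj c d)
       \<or> (\<forall>d. mi_adj b d \<longrightarrow> mi_adj a d \<or> mi_adj c d)
       \<or> (\<forall>d. mi_adj c d \<longrightarrow> mi_adj a d \<or> mi_adj b d)"
proof -
  have bc': "mi_less b c \<or> mi_less c b \<or> mi_less b (prod.swap c) \<or> mi_less (prod.swap c) b"
    using bc unfolding mi_adj_def .
  consider (above) "mi_less a b" "mi_less a c" | (cab) "mi_less c a" "mi_less a b"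
    | (bac) "mi_less b a" "mi_less a c" | (below) "mi_less b a" "mi_less c a"
    using assms(5,6) by blast
  then show ?thesis
  proof cases
    case above
    then have "mi_less b c \<or> mi_less c b"
      using bc' mi_less_upper_bounds_uncrossed[OF a c b above(2,1)] by blast
    then show ?thesis
      using mi_adj_middle[OF above(1)] mi_adj_middle[OF above(2)] by blast
  next
    case cab
    then show ?thesis using mi_adj_middle[OF cab] by blast
  next
    case bac
    then show ?thesis using mi_adj_middle[OF bac] by blast
  next
    case below
    then have "mi_less b c \<or> mi_less c b"
      using bc' mi_less_lower_bounds_uncrossed[OF sym a c b below(2,1)] by blast
    then show ?thesis
      using mi_adj_middle[of _ _ a, OF _ below(1)] mi_adj_middle[of _ _ a, OF _ below(2)] by blast
  qed
qed

lemma mi_adj_triangle_has_middle: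
  assumes sym: "\<forall>x y. E x y \<longrightarrow> E y x"
    and a: "side_pair E P a" and b: "side_pair E Q b" and c: "side_pair E R c"
    and "mi_adj a b" "mi_adj a c" "mi_adj b c"
  shows "(\<forall>d. mi_adj a d \<longrightarrow> mi_adj b d \<or> mi_adj c d)
       \<or> (\<forall>d. mi_adj b d \<longrightarrow> mi_adj a d \<or> mi_adj c d)
       \<or> (\<forall>d. mi_adj c d \<longrightarrow> mi_adj a d \<or> mi_adj b d)"
proof -
  obtain b' where b': "side_pair E Q b'" "mi_less a b' \<or> mi_less b' a" "mi_adj b' = mi_adj b"
    using mi_adj_orient[OF sym b \<open>mi_adj a b\<close>] .
  obtain c' where c': "side_pair E R c'" "mi_less a c' \<or> mi_less c' a" "mi_adj c' = mi_adj c"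
    using mi_adj_orient[OF sym c \<open>mi_adj a c\<close>] .
  have "mi_adj b' c'" using b'(3) c'(3) \<open>mi_adj b c\<close> mi_adj_commute by metis
  from mi_adj_oriented_triangle_has_middle[OF sym a b'(1) c'(1) b'(2) c'(2) this]
  show ?thesis unfolding b'(3) c'(3) .
qed

lemma KBm_E_biclique: "KBm_E V E P Q \<Longrightarrow> biclique V E P \<and> biclique V E Q \<and> P \<noteq> Q"
  unfolding KBm_E_def by blast

lemma KBm_E_dominated:
  assumes sym: "\<forall>x y. E x y \<longrightarrow> E y x"
    and m: "side_pair E M m" and n: "side_pair E N n" "side_pair E N' n'"
    and "biclique V E N" "biclique V E N'"
    and dom: "\<forall>d. mi_adj m d \<longrightarrow> mi_adj n d \<or> mi_adj n' d" and MQ: "KBm_E V E M Q"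
  shows "Q = N \<or> Q = N' \<or> KBm_E V E N Q \<or> KBm_E V E N' Q"
proof -
  obtain q where q: "side_pair E Q q"
    using KBm_E_biclique[OF MQ] biclique_side_pair by metis
  have "mi_adj m q" using MQ KBm_E_iff_mi_adj[OF sym m q] by blast
  then have "mi_adj n q \<or> mi_adj n' q" using dom by blast
  then show ?thesis
    using KBm_E_iff_mi_adj[OF sym n(1) q] KBm_E_iff_mi_adj[OF sym n(2) q]
      KBm_E_biclique[OF MQ] assms(5,6) by blast
qed

lemma KBm_triangle_vertex_without_private_neighbour:
  assumes sym: "\<forall>x y. E x y \<longrightarrow> E y x"
    and "KBm_E V E P1 P2" "KBm_E V E P1 P3" "KBm_E V E P2 P3"
  shows "\<exists>M\<in>{P1, P2, P3}. \<forall>Q. Q \<notin> {P1, P2, P3} \<longrightarrow> KBm_E V E M Q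
           \<longrightarrow> (\<exists>N\<in>{P1, P2, P3} - {M}. KBm_E V E N Q)"
proof -
  have bic: "biclique V E P1" "biclique V E P2" "biclique V E P3"
    and distinct: "P1 \<noteq> P2" "P1 \<noteq> P3" "P2 \<noteq> P3"
    using assms(2-4) KBm_E_biclique by blast+
  obtain p1 p2 p3 where p: "side_pair E P1 p1" "side_pair E P2 p2" "side_pair E P3 p3"
    using bic biclique_side_pair by metis
  have "mi_adj p1 p2" "mi_adj p1 p3" "mi_adj p2 p3"
    using assms(2-4) KBm_E_iff_mi_adj[OF sym] p by blast+
  note middle = mi_adj_triangle_has_middle[OF sym p this]
  have no_private: ?thesis
    if "M \<in> {P1, P2, P3}" and others: "N \<in> {P1, P2, P3} - {M}" "N' \<in> {P1, P2, P3} - {M}"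
      and m: "side_pair E M m" and n: "side_pair E N n" "side_pair E N' n'"
      and dom: "\<forall>d. mi_adj m d \<longrightarrow> mi_adj n d \<or> mi_adj n' d"
    for M N N' m n n'
  proof (rule bexI[OF _ \<open>M \<in> {P1, P2, P3}\<close>], intro allI impI)
    fix Q assume Q: "Q \<notin> {P1, P2, P3}" "KBm_E V E M Q"
    have "biclique V E N" "biclique V E N'" using others bic by auto
    moreover have "Q \<noteq> N" "Q \<noteq> N'" using others Q(1) by auto
    ultimately have "KBm_E V E N Q \<or> KBm_E V E N' Q"
      using KBm_E_dominated[OF sym m n _ _ dom Q(2)] by blast
    then show "\<exists>N\<in>{P1, P2, P3} - {M}. KBm_E V E N Q" using others by blast
  qed
  from middle consider
      "\<forall>d. mi_adj p1 d \<longrightarrow> mi_adj p2 d \<or> mi_adj p3 d"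
    | "\<forall>d. mi_adj p2 d \<longrightarrow> mi_adj p1 d \<or> mi_adj p3 d"
    | "\<forall>d. mi_adj p3 d \<longrightarrow> mi_adj p1 d \<or> mi_adj p2 d"
    by blast
  then show ?thesis
  proof cases
    case 1
    show ?thesis by (rule no_private[OF _ _ _ p(1,2,3) 1]) (use distinct in simp_all)
  next
    case 2
    show ?thesis by (rule no_private[OF _ _ _ p(2,1,3) 2]) (use distinct in simp_all)
  next
    case 3
    show ?thesis by (rule no_private[OF _ _ _ p(3,1,2) 3]) (use distinct in simp_all)
  qed
qed

lemma net_star_E_triangle_vertex:
  assumes "net_star_extra S" "a < 3"
  shows "net_star_E S a b \<longleftrightarrow> net_E a b"
proof -
  have "{a, b} \<notin> S"
  proof
    assume "{a, b} \<in> S"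
    then have "a \<in> \<Union>{{3, 4}, {3, 5}, {4, 5 :: nat}}"
      using assms(1) unfolding net_star_extra_def by blast
    then show False using assms(2) by auto
  qed
  then show ?thesis unfolding net_star_E_def by blast
qed

lemma net_E_triangle: "net_E 0 1" "net_E 0 2" "net_E 1 2"
  unfolding net_E_def by simp_all

lemma net_E_private_neighbour:
  assumes "i < 3" "j < 3"
  shows "net_E j (i + 3) \<longleftrightarrow> j = i"
proof -
  have "i \<in> {0, 1, 2}" "j \<in> {0, 1, 2}" using assms by auto
  then show ?thesis unfolding net_E_def by (auto simp: doubleton_eq_iff)
qed

theorem corollary3:
  fixes V :: "'a set" and E :: "'a \<Rightarrow> 'a \<Rightarrow> bool"
  assumes "simple_graph V E"
  shows "\<not> (\<exists>S. net_star_extra S \<and> has_induced_copy (KBm_V V E) (KBm_E V E) net_V (net_star_E S))"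
proof
  assume "\<exists>S. net_star_extra S \<and> has_induced_copy (KBm_V V E) (KBm_E V E) net_V (net_star_E S)"
  then obtain S where S: "net_star_extra S"
    and "has_induced_copy (KBm_V V E) (KBm_E V E) net_V (net_star_E S)" by blast
  then obtain f where inj: "inj_on f {0..<6}"
    and edges: "\<forall>a\<in>{0..<6}. \<forall>b\<in>{0..<6}. KBm_E V E (f a) (f b) \<longleftrightarrow> net_star_E S a b"
    unfolding has_induced_copy_def net_V_def by blast
  have sym: "\<forall>x y. E x y \<longrightarrow> E y x" using assms unfolding simple_graph_def by blast
  have adj: "KBm_E V E (f i) (f j) \<longleftrightarrow> net_E i j" if "i < 3" "j < 6" for i j
    using edges net_star_E_triangle_vertex[OF S \<open>i < 3\<close>] that by simp
  have "KBm_E V E (f 0) (f 1)" "KBm_E V E (f 0) (f 2)" "KBm_E V E (f 1) (f 2)"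
    using adj net_E_triangle by simp_all
  from KBm_triangle_vertex_without_private_neighbour[OF sym this]
  obtain M where "M \<in> {f 0, f 1, f 2}" and M: "\<forall>Q. Q \<notin> {f 0, f 1, f 2}
      \<longrightarrow> KBm_E V E M Q \<longrightarrow> (\<exists>N\<in>{f 0, f 1, f 2} - {M}. KBm_E V E N Q)" ..
  then obtain i where "i \<in> {0, 1, 2}" and M_def: "M = f i" by blast
  then have i: "i < 3" by auto
  have "f (i + 3) \<notin> {f 0, f 1, f 2}" using inj i by (auto simp: inj_on_eq_iff)
  moreover have "KBm_E V E M (f (i + 3))" using adj net_E_private_neighbour i M_def by simp
  ultimately obtain j where "j \<in> {0, 1, 2}" "j \<noteq> i" "KBm_E V E (f j) (f (i + 3))"
    using M M_def by blast
  then show False using adj net_E_private_neighbour i by auto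
qed

end
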